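(* Let $N\ge0$, let $H_0\in\mathbb{R}$ and $H_n:\mathbb{Z}^n\to\mathbb{R}$ ($1\le n\le N$) be finitely supported kernels, and let $f(x)=\sum_{n=0}^{N}H_n*x^n$. For finitely supported signals $x,\epsilon:\mathbb{Z}\to\mathbb{R}$, $$\|f(x+\epsilon)-f(x)\|_2\le\min\left(\sum_{n=0}^{N}\|H_n\|_2\sum_{k=0}^{n-1}\Big(\frac{en}{k}\Big)^k\|x\|_1^k\|\epsilon\|_1^{n-k},\ \sum_{n=0}^{N}\|H_n\|_1\sum_{k=0}^{n-1}\Big(\frac{en}{k}\Big)^k\|x\|_{2k}^k\|\epsilon\|_{2(n-k)}^{n-k}\right),$$ where $e$ is the base of the natural logarithm.
   Context: Signals are real functions on $\mathbb{Z}$. For a kernel $H:\mathbb{Z}^n\to\mathbb{R}$ ($n\ge1$) and signals $x_1,\dots,x_n$, the order-$n$ convolution is $(H*[x_1,\dots,x_n])(t)=\sum_{(\tau_1,\dots,\tau_n)\in\mathbb{Z}^n}H(\tau_1,\dots,\tau_n)\prod_{i=1}^n x_i(t-\tau_i)$, and $H*x^n$ denotes $H*[x,\dots,x]$ ($n$ copies); for $n=0$, $H_0*x^0$ is the constant signal $H_0$. For a function $A$ on $\mathbb{Z}^d$, $\|A\|_p=(\sum_{\tau}|A(\tau)|^p)^{1/p}$. Empty sums are $0$; in the $k=0$ terms, $(en/k)^k$ and $\|x\|_{2k}^k$ are interpreted as $1$. *)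

theory Defs
  imports "HOL-Analysis.Analysis"
begin

text \<open>Signals are functions int => real. A kernel of order n is a function on Z^n,
represented as a function on int lists, only its values on lists of length n matter.\<close>

type_synonym signal = "int \<Rightarrow> real"
type_synonym kernel = "int list \<Rightarrow> real"

definition tuples :: "nat \<Rightarrow> int list set" where
  "tuples n = {\<tau>. length \<tau> = n}"

definition conv :: "kernel \<Rightarrow> signal list \<Rightarrow> signal" where
  "conv H xs t = (\<Sum>\<^sub>\<infinity>\<tau>\<in>tuples (length xs). H \<tau> * (\<Prod>i<length xs. (xs ! i) (t - \<tau> ! i)))"

definition conv_pow :: "kernel \<Rightarrow> nat \<Rightarrow> signal \<Rightarrow> signal" where
  "conv_pow H n x = conv H (replicate n x)"

definition lp_norm :: "real \<Rightarrow> ('a \<Rightarrow> real) \<Rightarrow> 'a set \<Rightarrow> real" where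
  "lp_norm p A S = (\<Sum>\<^sub>\<infinity>\<tau>\<in>S. \<bar>A \<tau>\<bar> powr p) powr (1 / p)"

abbreviation sig_norm :: "real \<Rightarrow> signal \<Rightarrow> real" where
  "sig_norm p x \<equiv> lp_norm p x UNIV"

abbreviation ker_norm :: "real \<Rightarrow> nat \<Rightarrow> kernel \<Rightarrow> real" where
  "ker_norm p n H \<equiv> lp_norm p H (tuples n)"

text \<open>Polynomial (Volterra) operator f(x) = sum_{n=0}^N H_n * x^n;
 H 0 is the kernel on Z^0 = {[]}, whose value H 0 [] is the constant H_0.\<close>
definition volterra :: "nat \<Rightarrow> (nat \<Rightarrow> kernel) \<Rightarrow> signal \<Rightarrow> signal" where
  "volterra N H x t = (\<Sum>n\<le>N. conv_pow (H n) n x t)"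

end

(* Expanding (x + eps)^n multilinearly, H * (x + eps)^n - H * x^n is the sum, over the nonempty
   sets S of positions, of the convolution of H with eps at the positions in S and x elsewhere;
   there are (n choose k) such S leaving k copies of x, and (n choose k) <= (e n / k)^k.
   Each such convolution is bounded in two ways, both by Minkowski's inequality in l2: as a
   superposition of translates of H weighted by products of signal values it is at most
   ||H||_2 times the product of the l1 norms of the signals (Young); as a superposition of
   products of translated signals weighted by the values of H it is at most ||H||_1 times the
   l2 norm of such a product, which AM-GM bounds by ||x||_2k^k ||eps||_2(n-k)^(n-k). *)

theory Submission
  imports Defs
begin

section \<open>Norms of finitely supported functions\<close>

lemma lp_norm_nonneg: "0 \<le> lp_norm p f S"
  unfolding lp_norm_def by simp

lemma lp_norm_eq_sum:
  assumes "finite T" "support_on S f \<subseteq> T" "T \<subseteq> S"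
  shows "lp_norm p f S = (\<Sum>t\<in>T. \<bar>f t\<bar> powr p) powr (1 / p)"
proof -
  have "infsum (\<lambda>t. \<bar>f t\<bar> powr p) S = infsum (\<lambda>t. \<bar>f t\<bar> powr p) T"
    by (rule infsum_cong_neutral) (use assms in \<open>auto simp: support_on_def\<close>)
  then show ?thesis
    unfolding lp_norm_def using assms(1) by simp
qed

lemma lp_norm_1_eq_sum:
  assumes "finite T" "support_on S f \<subseteq> T" "T \<subseteq> S"
  shows "lp_norm 1 f S = (\<Sum>t\<in>T. \<bar>f t\<bar>)"
  using lp_norm_eq_sum[OF assms, of 1] by (simp add: sum_nonneg)

lemma lp_norm_even_power_eq_sqrt_sum:
  assumes "finite T" "support_on S f \<subseteq> T" "T \<subseteq> S" and "0 < m"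
  shows "lp_norm (2 * real m) f S ^ m = sqrt (\<Sum>t\<in>T. f t ^ (2 * m))"
proof -
  define Q where "Q = (\<Sum>t\<in>T. f t ^ (2 * m))"
  have "\<bar>f t\<bar> powr (2 * real m) = f t ^ (2 * m)" for t
    using assms(4) powr_realpow[of "\<bar>f t\<bar>" "2 * m"]
    by (cases "f t = 0") (auto simp: power_even_abs)
  then have "lp_norm (2 * real m) f S = Q powr (1 / (2 * real m))"
    unfolding Q_def using lp_norm_eq_sum[OF assms(1-3)] by simp
  moreover have "(Q powr (1 / (2 * real m))) ^ m = sqrt Q"
    using assms(4) by (cases "Q = 0") (auto simp: powr_power powr_half_sqrt[symmetric] Q_def
        sum_nonneg zero_le_even_power)
  ultimately show ?thesis
    unfolding Q_def by simp
qed

lemma lp_norm_2_eq_L2_set: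
  assumes "finite T" "support_on S f \<subseteq> T" "T \<subseteq> S"
  shows "lp_norm 2 f S = L2_set f T"
  using lp_norm_even_power_eq_sqrt_sum[OF assms, of 1] by (simp add: L2_set_def)

lemma lp_norm_2_eq_L2_set_UNIV:
  "finite T \<Longrightarrow> support_on UNIV f \<subseteq> T \<Longrightarrow> lp_norm 2 f UNIV = L2_set f T"
  by (rule lp_norm_2_eq_L2_set) auto

lemma support_on_add_subset:
  "support_on S (\<lambda>t. f t + g t) \<subseteq> support_on S f \<union> support_on S g"
  by (auto simp: support_on_def)

lemma support_on_sum_subset:
  "support_on S (\<lambda>t. \<Sum>i\<in>I. F i t) \<subseteq> (\<Union>i\<in>I. support_on S (F i))"
  by (auto simp: support_on_def intro: ccontr sum.neutral)

lemma finite_support_sum: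
  "finite I \<Longrightarrow> (\<And>i. i \<in> I \<Longrightarrow> finite (support_on S (F i)))
    \<Longrightarrow> finite (support_on S (\<lambda>t. \<Sum>i\<in>I. F i t))"
  by (rule finite_subset[OF support_on_sum_subset]) auto

lemma finite_support_mult:
  fixes f g :: "'a \<Rightarrow> real"
  shows "finite (support_on S g) \<Longrightarrow> finite (support_on S (\<lambda>t. f t * g t))"
  by (rule finite_subset[of _ "support_on S g"]) (auto simp: support_on_def)

lemma finite_support_prod:
  fixes F :: "'i \<Rightarrow> 'a \<Rightarrow> real"
  assumes "finite I" "i \<in> I" "finite (support_on S (F i))"
  shows "finite (support_on S (\<lambda>t. \<Prod>j\<in>I. F j t))"
  by (rule finite_subset[of _ "support_on S (F i)"]) (use assms in \<open>auto simp: support_on_def\<close>)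

lemma finite_support_shift:
  fixes y :: "'a::ab_group_add \<Rightarrow> real"
  assumes "finite (support_on UNIV y)"
  shows "finite (support_on UNIV (\<lambda>t. y (t - c)))"
proof -
  have "support_on UNIV (\<lambda>t. y (t - c)) = (\<lambda>t. t - c) -` support_on UNIV y"
    by (auto simp: support_on_def)
  with assms show ?thesis
    by (auto intro: finite_vimageI simp: inj_on_def)
qed

lemma lp_norm_2_add_le:
  assumes "finite (support_on UNIV f)" "finite (support_on UNIV g)"
  shows "lp_norm 2 (\<lambda>t. f t + g t) UNIV \<le> lp_norm 2 f UNIV + lp_norm 2 g UNIV"
proof -
  let ?T = "support_on UNIV f \<union> support_on UNIV g"
  have "lp_norm 2 (\<lambda>t. f t + g t) UNIV = L2_set (\<lambda>t. f t + g t) ?T"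
    using assms support_on_add_subset[of UNIV f g] by (intro lp_norm_2_eq_L2_set_UNIV) auto
  also have "\<dots> \<le> L2_set f ?T + L2_set g ?T"
    by (rule L2_set_triangle_ineq)
  also have "\<dots> = lp_norm 2 f UNIV + lp_norm 2 g UNIV"
    using assms by (simp add: lp_norm_2_eq_L2_set_UNIV[of ?T])
  finally show ?thesis .
qed

lemma lp_norm_2_sum_le:
  assumes "finite I" "\<And>i. i \<in> I \<Longrightarrow> finite (support_on UNIV (F i))"
  shows "lp_norm 2 (\<lambda>t. \<Sum>i\<in>I. F i t) UNIV \<le> (\<Sum>i\<in>I. lp_norm 2 (F i) UNIV)"
  using assms
proof (induction I rule: finite_induct)
  case empty
  then show ?case
    by (simp add: lp_norm_def)
next
  case (insert a I)
  have "finite (support_on UNIV (\<lambda>t. \<Sum>i\<in>I. F i t))"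
    using insert by (intro finite_support_sum) auto
  then have "lp_norm 2 (\<lambda>t. F a t + (\<Sum>i\<in>I. F i t)) UNIV
      \<le> lp_norm 2 (F a) UNIV + lp_norm 2 (\<lambda>t. \<Sum>i\<in>I. F i t) UNIV"
    using insert by (intro lp_norm_2_add_le) auto
  with insert show ?case
    by simp
qed

lemma lp_norm_2_cmult:
  assumes "finite (support_on UNIV f)"
  shows "lp_norm 2 (\<lambda>t. c * f t) UNIV = \<bar>c\<bar> * lp_norm 2 f UNIV"
proof -
  let ?T = "support_on UNIV f"
  have "lp_norm 2 (\<lambda>t. c * f t) UNIV = L2_set (\<lambda>t. \<bar>c\<bar> * f t) ?T"
    using assms by (subst lp_norm_2_eq_L2_set_UNIV[of ?T])
      (auto simp: support_on_def L2_set_def power_mult_distrib)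
  also have "\<dots> = \<bar>c\<bar> * lp_norm 2 f UNIV"
    using assms by (simp add: L2_set_right_distrib lp_norm_2_eq_L2_set_UNIV)
  finally show ?thesis .
qed

lemma lp_norm_2_mult_le:
  assumes "finite (support_on UNIV f)" "finite (support_on UNIV g)"
  shows "lp_norm 2 (\<lambda>t. f t * g t) UNIV \<le> lp_norm 2 f UNIV * lp_norm 2 g UNIV"
proof -
  let ?T = "support_on UNIV f \<union> support_on UNIV g"
  have g_le: "\<bar>g t\<bar> \<le> L2_set g ?T" if "t \<in> ?T" for t
    using member_le_L2_set[OF _ that, of "\<lambda>t. \<bar>g t\<bar>"] assms by (simp add: L2_set_def)
  have "lp_norm 2 (\<lambda>t. f t * g t) UNIV = L2_set (\<lambda>t. \<bar>f t * g t\<bar>) ?T"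
    using assms by (subst lp_norm_2_eq_L2_set_UNIV[of ?T]) (auto simp: support_on_def L2_set_def)
  also have "\<dots> \<le> L2_set (\<lambda>t. L2_set g ?T * \<bar>f t\<bar>) ?T"
    using g_le by (intro L2_set_mono) (auto simp: abs_mult mult.commute mult_left_mono)
  also have "\<dots> = L2_set g ?T * L2_set (\<lambda>t. \<bar>f t\<bar>) ?T"
    by (rule L2_set_right_distrib[symmetric]) simp
  also have "\<dots> = lp_norm 2 f UNIV * lp_norm 2 g UNIV"
    using assms by (simp add: L2_set_def lp_norm_2_eq_L2_set_UNIV[of ?T])
  finally show ?thesis .
qed

lemma lp_norm_shift:
  fixes y :: "'a::ab_group_add \<Rightarrow> real"
  shows "lp_norm p (\<lambda>t. y (t - c)) UNIV = lp_norm p y UNIV"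
proof -
  have "bij_betw (\<lambda>t. t - c) UNIV UNIV"
    by (rule bij_betw_byWitness[where f' = "\<lambda>u. u + c"]) auto
  then show ?thesis
    unfolding lp_norm_def by (simp add: infsum_reindex_bij_betw[where f = "\<lambda>u. \<bar>y u\<bar> powr p"])
qed

lemma finite_support_comp_inj:
  assumes "inj g" "range g \<subseteq> S" "finite (support_on S H)"
  shows "finite (support_on UNIV (\<lambda>t. H (g t)))"
proof (rule finite_subset)
  show "support_on UNIV (\<lambda>t. H (g t)) \<subseteq> g -` support_on S H"
    using assms(2) by (auto simp: support_on_def)
  show "finite (g -` support_on S H)"
    using assms by (auto intro: finite_vimageI)
qed

lemma lp_norm_2_comp_inj_le:
  assumes "inj g" "range g \<subseteq> S" "finite (support_on S H)"
  shows "lp_norm 2 (\<lambda>t. H (g t)) UNIV \<le> lp_norm 2 H S"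
proof -
  let ?T = "g -` support_on S H"
  have "finite ?T"
    using assms by (auto intro: finite_vimageI)
  have "lp_norm 2 (\<lambda>t. H (g t)) UNIV = L2_set (\<lambda>t. H (g t)) ?T"
    using \<open>finite ?T\<close> assms(2) by (intro lp_norm_2_eq_L2_set_UNIV) (auto simp: support_on_def)
  also have "\<dots> = L2_set H (g ` ?T)"
    unfolding L2_set_def by (subst sum.reindex) (use assms(1) in \<open>auto simp: inj_on_def inj_def\<close>)
  also have "\<dots> \<le> L2_set H (support_on S H)"
    unfolding L2_set_def using assms(3) by (intro real_sqrt_le_mono sum_mono2) auto
  also have "\<dots> = lp_norm 2 H S"
    using assms(3) by (simp add: lp_norm_2_eq_L2_set support_on_def)
  finally show ?thesis .
qed

lemma prod_square_le_mean_power: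
  fixes a :: "'i \<Rightarrow> real"
  assumes "finite I" "I \<noteq> {}"
  shows "(\<Prod>i\<in>I. a i)\<^sup>2 \<le> (\<Sum>i\<in>I. a i ^ (2 * card I) / card I)"
proof -
  let ?m = "card I"
  have "?m \<noteq> 0"
    using assms by simp
  have "(\<Prod>i\<in>I. a i ^ (2 * ?m)) = ((\<Prod>i\<in>I. a i)\<^sup>2) ^ ?m"
    by (simp add: power_mult prod_power_distrib)
  also have "\<dots> = ((\<Prod>i\<in>I. a i)\<^sup>2) powr ?m"
    using \<open>?m \<noteq> 0\<close> by (simp add: powr_realpow')
  finally have "(\<Prod>i\<in>I. a i ^ (2 * ?m)) powr (1 / ?m) = (\<Prod>i\<in>I. a i)\<^sup>2"
    using \<open>?m \<noteq> 0\<close> by (simp add: powr_powr)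
  moreover have "(\<Prod>i\<in>I. a i ^ (2 * ?m)) powr (1 / ?m) \<le> (\<Sum>i\<in>I. a i ^ (2 * ?m) / ?m)"
    using assms by (intro arith_geom_mean) (auto simp: power_mult)
  ultimately show ?thesis
    by simp
qed

lemma lp_norm_2_prod_shifts_le:
  fixes y :: "'a::ab_group_add \<Rightarrow> real"
  assumes I: "finite I" "I \<noteq> {}" and y: "finite (support_on UNIV y)"
  shows "lp_norm 2 (\<lambda>t. \<Prod>i\<in>I. y (t - c i)) UNIV \<le> lp_norm (2 * real (card I)) y UNIV ^ card I"
proof -
  let ?m = "card I"
  let ?N = "lp_norm (2 * real ?m) y UNIV ^ ?m"
  define T where "T = (\<Union>i\<in>I. (\<lambda>s. s + c i) ` support_on UNIV y)"
  have "finite T"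
    unfolding T_def using I y by blast
  have supp_shift: "support_on UNIV (\<lambda>t. y (t - c i)) \<subseteq> T" if "i \<in> I" for i
    using that by (force simp: T_def support_on_def image_iff)
  have shift_sum: "(\<Sum>t\<in>T. y (t - c i) ^ (2 * ?m)) = ?N\<^sup>2" if "i \<in> I" for i
  proof -
    have "?N = sqrt (\<Sum>t\<in>T. y (t - c i) ^ (2 * ?m))"
      using lp_norm_even_power_eq_sqrt_sum[OF \<open>finite T\<close> supp_shift[OF that], of ?m] I
      by (simp add: lp_norm_shift card_gt_0_iff)
    then show ?thesis
      by (simp add: sum_nonneg zero_le_even_power)
  qed
  have "support_on UNIV (\<lambda>t. \<Prod>i\<in>I. y (t - c i)) \<subseteq> T"
    using I supp_shift by (fastforce simp: support_on_def)
  then have "lp_norm 2 (\<lambda>t. \<Prod>i\<in>I. y (t - c i)) UNIV = sqrt (\<Sum>t\<in>T. (\<Prod>i\<in>I. y (t - c i))\<^sup>2)"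
    using \<open>finite T\<close> by (simp add: lp_norm_2_eq_L2_set_UNIV L2_set_def)
  also have "\<dots> \<le> sqrt (\<Sum>t\<in>T. \<Sum>i\<in>I. y (t - c i) ^ (2 * ?m) / ?m)"
    using I by (intro real_sqrt_le_mono sum_mono prod_square_le_mean_power)
  also have "(\<Sum>t\<in>T. \<Sum>i\<in>I. y (t - c i) ^ (2 * ?m) / ?m)
      = (\<Sum>i\<in>I. (\<Sum>t\<in>T. y (t - c i) ^ (2 * ?m)) / ?m)"
    by (subst sum.swap) (simp add: sum_divide_distrib)
  also have "\<dots> = (\<Sum>i\<in>I. ?N\<^sup>2 / ?m)"
    using shift_sum by simp
  also have "sqrt (\<Sum>i\<in>I. ?N\<^sup>2 / ?m) = ?N"
    using I by (simp add: lp_norm_nonneg)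
  finally show ?thesis .
qed

section \<open>Combinatorial estimates\<close>

lemma sum_lists_length_eq_prod:
  fixes f :: "nat \<Rightarrow> 'a \<Rightarrow> 'b::comm_semiring_1"
  assumes "finite A"
  shows "(\<Sum>l\<in>{l. set l \<subseteq> A \<and> length l = n}. \<Prod>i<n. f i (l ! i)) = (\<Prod>i<n. \<Sum>a\<in>A. f i a)"
proof (induction n arbitrary: f)
  case 0
  have "{l. set l \<subseteq> A \<and> length l = 0} = {[]}"
    by auto
  then show ?case
    by simp
next
  case (Suc n)
  let ?L = "{l. set l \<subseteq> A \<and> length l = n}"
  have inj: "inj_on (\<lambda>(l, a). a # l) (?L \<times> A)"
    by (auto simp: inj_on_def)
  have "(\<Sum>l\<in>{l. set l \<subseteq> A \<and> length l = Suc n}. \<Prod>i<Suc n. f i (l ! i))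
      = (\<Sum>(l, a)\<in>?L \<times> A. f 0 a * (\<Prod>i<n. f (Suc i) (l ! i)))"
    unfolding lists_length_Suc_eq
    by (subst sum.reindex[OF inj]) (simp add: case_prod_unfold prod.lessThan_Suc_shift del: prod.lessThan_Suc)
  also have "\<dots> = (\<Sum>a\<in>A. f 0 a) * (\<Sum>l\<in>?L. \<Prod>i<n. f (Suc i) (l ! i))"
    by (simp add: sum_product sum.cartesian_product[symmetric] sum.swap[of _ A] mult.commute)
  also have "\<dots> = (\<Prod>i<Suc n. \<Sum>a\<in>A. f i a)"
    using Suc.IH[of "\<lambda>i. f (Suc i)"] by (simp add: prod.lessThan_Suc_shift del: prod.lessThan_Suc)
  finally show ?case .
qed

lemma sum_nonempty_subsets_card:
  fixes g :: "nat \<Rightarrow> real"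
  assumes "finite A"
  shows "(\<Sum>S\<in>Pow A - {{}}. g (card S)) = (\<Sum>k<card A. real (card A choose k) * g (card A - k))"
proof -
  let ?n = "card A"
  have card_range: "card ` (Pow A - {{}}) \<subseteq> {1..?n}"
    using assms by (auto simp: Suc_le_eq card_gt_0_iff card_mono dest: finite_subset[OF _ assms])
  have layer: "(\<Sum>S\<in>{S \<in> Pow A - {{}}. card S = j}. g (card S)) = real (?n choose j) * g j"
    if "j \<in> {1..?n}" for j
  proof -
    have "{S \<in> Pow A - {{}}. card S = j} = {S. S \<subseteq> A \<and> card S = j}"
      using that by auto
    then show ?thesis
      using n_subsets[OF assms, of j] by simp
  qed
  have "(\<Sum>S\<in>Pow A - {{}}. g (card S)) = (\<Sum>j\<in>{1..?n}. \<Sum>S\<in>{S \<in> Pow A - {{}}. card S = j}. g (card S))"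
    using assms card_range by (intro sum.group[symmetric]) auto
  also have "\<dots> = (\<Sum>j\<in>{1..?n}. real (?n choose j) * g j)"
    using layer by (rule sum.cong[OF refl])
  also have "\<dots> = (\<Sum>k<?n. real (?n choose (?n - k)) * g (?n - k))"
    by (rule sum.reindex_bij_witness[of _ "\<lambda>k. ?n - k" "\<lambda>j. ?n - j"]) auto
  also have "\<dots> = (\<Sum>k<?n. real (?n choose k) * g (?n - k))"
    by (intro sum.cong refl) (simp add: binomial_symmetric[symmetric])
  finally show ?thesis .
qed

lemma power_div_fact_le_exp:
  fixes x :: real
  assumes "0 \<le> x"
  shows "x ^ k / fact k \<le> exp x"
proof -
  have series: "(\<lambda>j. x ^ j / fact j) sums exp x"
    using exp_converges[of x] by (simp add: divide_inverse_commute scaleR_conv_of_real)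
  have "(\<Sum>j\<in>{k}. x ^ j / fact j) \<le> (\<Sum>j. x ^ j / fact j)"
    using series assms by (intro sum_le_suminf) (auto simp: sums_iff)
  with series show ?thesis
    by (simp add: sums_iff)
qed

lemma binomial_le_exp1_pow:
  "real (n choose k) \<le> (exp 1 * real n / real k) ^ k"
proof (cases "k = 0")
  case False
  have "real k ^ k \<le> exp 1 ^ k * fact k"
    using power_div_fact_le_exp[of "real k" k] by (simp add: exp_of_nat_mult[symmetric] divide_le_eq)
  then have "real (n choose k) * real k ^ k \<le> exp 1 ^ k * (real (n choose k) * fact k)"
    by (simp add: mult_left_mono mult.left_commute)
  also have "real (n choose k) * fact k \<le> real n ^ k"
    by (metis binomial_fact_pow of_nat_fact of_nat_le_iff of_nat_mult of_nat_power)
  finally have "real (n choose k) * real k ^ k \<le> exp 1 ^ k * real n ^ k"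
    by simp
  then show ?thesis
    using False by (simp add: power_divide power_mult_distrib pos_le_divide_eq)
qed simp

section \<open>Two estimates for a single convolution\<close>

lemma conv_eq_sum:
  assumes "finite (support_on (tuples (length xs)) H)"
  shows "conv H xs t = (\<Sum>\<tau>\<in>support_on (tuples (length xs)) H.
    H \<tau> * (\<Prod>i<length xs. (xs ! i) (t - \<tau> ! i)))"
proof -
  have "conv H xs t = (\<Sum>\<^sub>\<infinity>\<tau>\<in>support_on (tuples (length xs)) H.
      H \<tau> * (\<Prod>i<length xs. (xs ! i) (t - \<tau> ! i)))"
    unfolding conv_def by (rule infsum_cong_neutral) (auto simp: support_on_def)
  with assms show ?thesis
    by simp
qed

lemma finite_support_conv:
  assumes "finite (support_on (tuples (length xs)) H)"
    and "i < length xs" "finite (support_on UNIV (xs ! i))"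
  shows "finite (support_on UNIV (conv H xs))"
  unfolding conv_eq_sum[OF assms(1), abs_def] using assms
  by (intro finite_support_sum finite_support_mult finite_support_prod[of _ i] finite_support_shift) auto

lemma conv_eq_sum_lists:
  assumes "finite A" "\<And>i. i < length xs \<Longrightarrow> support_on UNIV (xs ! i) \<subseteq> A"
  shows "conv H xs t = (\<Sum>s\<in>{l. set l \<subseteq> A \<and> length l = length xs}.
    (\<Prod>i<length xs. (xs ! i) (s ! i)) * H (map (\<lambda>a. t - a) s))"
proof -
  let ?n = "length xs"
  let ?g = "map (\<lambda>a. t - a)"
  let ?F = "\<lambda>s. (\<Prod>i<?n. (xs ! i) (s ! i)) * H (?g s)"
  have bij: "bij_betw ?g (tuples ?n) (tuples ?n)"
    by (rule bij_betw_byWitness[where f' = ?g]) (auto simp: tuples_def comp_def)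
  have "conv H xs t = (\<Sum>\<^sub>\<infinity>s\<in>tuples ?n. H (?g s) * (\<Prod>i<?n. (xs ! i) (t - ?g s ! i)))"
    unfolding conv_def by (rule infsum_reindex_bij_betw[symmetric, OF bij])
  also have "\<dots> = (\<Sum>\<^sub>\<infinity>s\<in>tuples ?n. ?F s)"
    by (rule infsum_cong) (auto simp: tuples_def mult.commute intro!: prod.cong)
  also have "\<dots> = (\<Sum>\<^sub>\<infinity>s\<in>{l. set l \<subseteq> A \<and> length l = ?n}. ?F s)"
  proof (rule infsum_cong_neutral)
    fix s assume "s \<in> tuples ?n - {l. set l \<subseteq> A \<and> length l = ?n}"
    then obtain a where "a \<in> set s" "a \<notin> A" "length s = ?n"
      by (auto simp: tuples_def)
    then obtain i where "i < ?n" "s ! i \<notin> A"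
      by (auto simp: in_set_conv_nth)
    then show "?F s = 0"
      using assms(2) by (force simp: support_on_def intro!: prod_zero)
  qed (auto simp: tuples_def)
  finally show ?thesis
    using finite_lists_length_eq[OF assms(1)] by simp
qed

lemma sig_norm_2_conv_le_ker_norm_2:
  assumes H: "finite (support_on (tuples (length xs)) H)" and "xs \<noteq> []"
    and fin: "\<And>i. i < length xs \<Longrightarrow> finite (support_on UNIV (xs ! i))"
  shows "sig_norm 2 (conv H xs) \<le> ker_norm 2 (length xs) H * (\<Prod>i<length xs. sig_norm 1 (xs ! i))"
proof -
  let ?n = "length xs"
  define A where "A = (\<Union>i<?n. support_on UNIV (xs ! i))"
  define L where "L = {l. set l \<subseteq> A \<and> length l = ?n}"
  define c where "c s = (\<Prod>i<?n. (xs ! i) (s ! i))" for s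
  define K where "K s t = H (map (\<lambda>a. t - a) s)" for s t
  have "finite A"
    using fin by (simp add: A_def)
  then have "finite L"
    by (simp add: L_def finite_lists_length_eq)
  have K: "finite (support_on UNIV (K s)) \<and> sig_norm 2 (K s) \<le> ker_norm 2 ?n H" if "s \<in> L" for s
  proof -
    have "s \<noteq> []"
      using that \<open>xs \<noteq> []\<close> by (auto simp: L_def)
    let ?g = "\<lambda>t. map (\<lambda>a. t - a) s"
    have "inj ?g"
      using \<open>s \<noteq> []\<close> by (cases s) (auto intro!: injI)
    moreover have "range ?g \<subseteq> tuples ?n"
      using that by (auto simp: L_def tuples_def)
    ultimately show ?thesis
      unfolding K_def using finite_support_comp_inj[of ?g _ H] lp_norm_2_comp_inj_le[of ?g _ H] H
      by blast
  qed
  have "conv H xs = (\<lambda>t. \<Sum>s\<in>L. c s * K s t)"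
  proof
    fix t
    show "conv H xs t = (\<Sum>s\<in>L. c s * K s t)"
      unfolding L_def c_def K_def by (rule conv_eq_sum_lists[OF \<open>finite A\<close>]) (auto simp: A_def)
  qed
  then have "sig_norm 2 (conv H xs) \<le> (\<Sum>s\<in>L. sig_norm 2 (\<lambda>t. c s * K s t))"
    using \<open>finite L\<close> K by (simp add: lp_norm_2_sum_le finite_support_mult)
  also have "\<dots> = (\<Sum>s\<in>L. \<bar>c s\<bar> * sig_norm 2 (K s))"
    using K by (simp add: lp_norm_2_cmult)
  also have "\<dots> \<le> (\<Sum>s\<in>L. \<bar>c s\<bar> * ker_norm 2 ?n H)"
    using K by (intro sum_mono mult_left_mono) auto
  also have "\<dots> = ker_norm 2 ?n H * (\<Sum>s\<in>L. \<Prod>i<?n. \<bar>(xs ! i) (s ! i)\<bar>)"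
    by (simp add: c_def abs_prod sum_distrib_left mult.commute)
  also have "(\<Sum>s\<in>L. \<Prod>i<?n. \<bar>(xs ! i) (s ! i)\<bar>) = (\<Prod>i<?n. \<Sum>a\<in>A. \<bar>(xs ! i) a\<bar>)"
    unfolding L_def by (rule sum_lists_length_eq_prod[OF \<open>finite A\<close>])
  also have "\<dots> = (\<Prod>i<?n. sig_norm 1 (xs ! i))"
    using \<open>finite A\<close> by (intro prod.cong refl lp_norm_1_eq_sum[symmetric]) (auto simp: A_def)
  finally show ?thesis .
qed

lemma sig_norm_2_conv_le_ker_norm_1:
  assumes H: "finite (support_on (tuples (length xs)) H)"
    and "i < length xs" "finite (support_on UNIV (xs ! i))"
    and B: "\<And>\<tau>. \<tau> \<in> tuples (length xs) \<Longrightarrow>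
      sig_norm 2 (\<lambda>t. \<Prod>j<length xs. (xs ! j) (t - \<tau> ! j)) \<le> B"
  shows "sig_norm 2 (conv H xs) \<le> ker_norm 1 (length xs) H * B"
proof -
  let ?n = "length xs"
  let ?SH = "support_on (tuples ?n) H"
  define P where "P \<tau> t = (\<Prod>j<?n. (xs ! j) (t - \<tau> ! j))" for \<tau> t
  have fin: "finite (support_on UNIV (P \<tau>))" for \<tau>
    unfolding P_def using assms(2,3)
    by (intro finite_support_prod[of _ i] finite_support_shift) auto
  have "sig_norm 2 (conv H xs) \<le> (\<Sum>\<tau>\<in>?SH. sig_norm 2 (\<lambda>t. H \<tau> * P \<tau> t))"
    unfolding conv_eq_sum[OF H, abs_def] P_def[symmetric]
    using H fin by (intro lp_norm_2_sum_le finite_support_mult)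
  also have "\<dots> = (\<Sum>\<tau>\<in>?SH. \<bar>H \<tau>\<bar> * sig_norm 2 (P \<tau>))"
    using fin by (simp add: lp_norm_2_cmult)
  also have "\<dots> \<le> (\<Sum>\<tau>\<in>?SH. \<bar>H \<tau>\<bar> * B)"
    using B by (intro sum_mono mult_left_mono) (auto simp: P_def[abs_def] support_on_def)
  also have "\<dots> = ker_norm 1 ?n H * B"
    using H by (simp add: sum_distrib_right lp_norm_1_eq_sum[of ?SH] support_on_def)
  finally show ?thesis .
qed

section \<open>Multilinear expansion of the increment\<close>

definition mixed_signals :: "nat \<Rightarrow> nat set \<Rightarrow> signal \<Rightarrow> signal \<Rightarrow> signal list" where
  "mixed_signals n S e x = map (\<lambda>i. if i \<in> S then e else x) [0..<n]"

lemma length_mixed_signals [simp]: "length (mixed_signals n S e x) = n"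
  by (simp add: mixed_signals_def)

lemma nth_mixed_signals [simp]:
  "i < n \<Longrightarrow> mixed_signals n S e x ! i = (if i \<in> S then e else x)"
  by (simp add: mixed_signals_def)

lemma mixed_signals_empty: "mixed_signals n {} e x = replicate n x"
  by (simp add: mixed_signals_def map_replicate_const)

lemma prod_mixed_signals:
  assumes "S \<subseteq> {..<n}"
  shows "(\<Prod>i<n. F (mixed_signals n S e x ! i) i) = (\<Prod>i\<in>S. F e i) * (\<Prod>i\<in>{..<n} - S. F x i)"
proof -
  have "(\<Prod>i<n. F (mixed_signals n S e x ! i) i) = (\<Prod>i<n. if i \<in> S then F e i else F x i)"
    by (rule prod.cong) auto
  also have "\<dots> = (\<Prod>i\<in>S. F e i) * (\<Prod>i\<in>{..<n} - S. F x i)"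
    using assms by (simp add: prod.If_cases Int_absorb1 Diff_eq)
  finally show ?thesis .
qed

lemma prod_add_eq_sum_mixed:
  "(\<Prod>i<n. x (f i) + e (f i)) = (\<Sum>S\<in>Pow {..<n}. \<Prod>i<n. (mixed_signals n S e x ! i) (f i))"
proof -
  have "(\<Prod>i<n. x (f i) + e (f i)) = (\<Prod>i<n. e (f i) + x (f i))"
    by (simp add: add.commute)
  also have "\<dots> = (\<Sum>S\<in>Pow {..<n}. (\<Prod>i\<in>S. e (f i)) * (\<Prod>i\<in>{..<n} - S. x (f i)))"
    by (rule prod_add) simp
  also have "\<dots> = (\<Sum>S\<in>Pow {..<n}. \<Prod>i<n. (mixed_signals n S e x ! i) (f i))"
    by (intro sum.cong refl, subst prod_mixed_signals[where F = "\<lambda>y i. y (f i)"]) auto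
  finally show ?thesis .
qed

lemma conv_pow_add_eq_sum_mixed:
  assumes H: "finite (support_on (tuples n) H)"
  shows "conv_pow H n (\<lambda>s. x s + e s) t = (\<Sum>S\<in>Pow {..<n}. conv H (mixed_signals n S e x) t)"
proof -
  let ?SH = "support_on (tuples n) H"
  have "conv_pow H n (\<lambda>s. x s + e s) t
      = (\<Sum>\<tau>\<in>?SH. H \<tau> * (\<Prod>i<n. x (t - \<tau> ! i) + e (t - \<tau> ! i)))"
    using conv_eq_sum[of "replicate n _"] H by (simp add: conv_pow_def)
  also have "\<dots> = (\<Sum>\<tau>\<in>?SH. \<Sum>S\<in>Pow {..<n}.
      H \<tau> * (\<Prod>i<n. (mixed_signals n S e x ! i) (t - \<tau> ! i)))"
    by (intro sum.cong refl, subst prod_add_eq_sum_mixed) (rule sum_distrib_left)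
  also have "\<dots> = (\<Sum>S\<in>Pow {..<n}. conv H (mixed_signals n S e x) t)"
    using H by (subst sum.swap) (simp add: conv_eq_sum)
  finally show ?thesis .
qed

lemma conv_pow_add_diff_eq_sum_mixed:
  assumes "finite (support_on (tuples n) H)"
  shows "conv_pow H n (\<lambda>s. x s + e s) t - conv_pow H n x t
    = (\<Sum>S\<in>Pow {..<n} - {{}}. conv H (mixed_signals n S e x) t)"
  using conv_pow_add_eq_sum_mixed[OF assms, of x e t]
  by (simp add: sum.remove[of _ "{}"] mixed_signals_empty conv_pow_def)

lemma finite_support_conv_mixed:
  assumes "finite (support_on (tuples n) H)" "S \<subseteq> {..<n}" "S \<noteq> {}" "finite (support_on UNIV e)"
  shows "finite (support_on UNIV (conv H (mixed_signals n S e x)))"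
proof -
  obtain i where "i \<in> S"
    using assms(3) by blast
  with assms show ?thesis
    by (intro finite_support_conv[of _ _ i]) auto
qed

lemma finite_support_conv_pow_add_diff:
  assumes "finite (support_on (tuples n) H)" "finite (support_on UNIV e)"
  shows "finite (support_on UNIV (\<lambda>t. conv_pow H n (\<lambda>s. x s + e s) t - conv_pow H n x t))"
  unfolding conv_pow_add_diff_eq_sum_mixed[OF assms(1)]
  using assms by (intro finite_support_sum finite_support_conv_mixed) auto

lemma sig_norm_2_prod_mixed_le:
  assumes S: "S \<subseteq> {..<n}" "S \<noteq> {}"
    and x: "finite (support_on UNIV x)" and e: "finite (support_on UNIV e)"
  shows "sig_norm 2 (\<lambda>t. \<Prod>i<n. (mixed_signals n S e x ! i) (t - \<tau> ! i))
    \<le> sig_norm (2 * real (n - card S)) x ^ (n - card S) * sig_norm (2 * real (card S)) e ^ card S"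
proof -
  let ?Px = "\<lambda>t. \<Prod>i\<in>{..<n} - S. x (t - \<tau> ! i)"
  let ?Pe = "\<lambda>t. \<Prod>i\<in>S. e (t - \<tau> ! i)"
  have "finite S"
    using S(1) finite_subset by blast
  have card_Px: "card ({..<n} - S) = n - card S"
    using S(1) \<open>finite S\<close> by (simp add: card_Diff_subset)
  have eq: "(\<lambda>t. \<Prod>i<n. (mixed_signals n S e x ! i) (t - \<tau> ! i)) = (\<lambda>t. ?Px t * ?Pe t)"
    using S(1) by (intro ext, subst prod_mixed_signals[where F = "\<lambda>y i. y (t - \<tau> ! i)" for t])
      (auto simp: mult.commute)
  have "sig_norm 2 (\<lambda>t. ?Px t * ?Pe t)
    \<le> sig_norm (2 * real (n - card S)) x ^ (n - card S) * sig_norm 2 ?Pe"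
  proof (cases "{..<n} - S = {}")
    case True
    \<comment> \<open>the x-factor is the constant 1, not finitely supported, so \<open>lp_norm_2_mult_le\<close> does not apply\<close>
    then have "card S = n"
      using S(1) by (metis Diff_eq_empty_iff card_lessThan subset_antisym)
    then show ?thesis
      by (simp only: True) simp
  next
    case False
    obtain i j where "i \<in> S" "j \<in> {..<n} - S"
      using S(2) False by blast
    have "finite (support_on UNIV ?Px)"
      using \<open>j \<in> {..<n} - S\<close> x by (intro finite_support_prod[of _ j] finite_support_shift) auto
    moreover have "finite (support_on UNIV ?Pe)"
      using \<open>finite S\<close> \<open>i \<in> S\<close> e by (intro finite_support_prod[of _ i] finite_support_shift) auto
    ultimately have "sig_norm 2 (\<lambda>t. ?Px t * ?Pe t) \<le> sig_norm 2 ?Px * sig_norm 2 ?Pe"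
      by (rule lp_norm_2_mult_le)
    also have "\<dots> \<le> sig_norm (2 * real (n - card S)) x ^ (n - card S) * sig_norm 2 ?Pe"
      using lp_norm_2_prod_shifts_le[of "{..<n} - S" x] False x card_Px
      by (intro mult_right_mono) (auto simp: lp_norm_nonneg)
    finally show ?thesis .
  qed
  also have "\<dots> \<le> sig_norm (2 * real (n - card S)) x ^ (n - card S) * sig_norm (2 * real (card S)) e ^ card S"
    using \<open>finite S\<close> S(2) e
    by (intro mult_left_mono lp_norm_2_prod_shifts_le) (simp_all add: lp_norm_nonneg)
  finally show ?thesis
    unfolding eq .
qed

lemma sig_norm_2_conv_pow_add_diff_le:
  assumes H: "finite (support_on (tuples n) H)" and e: "finite (support_on UNIV e)"
    and bound: "\<And>S. S \<subseteq> {..<n} \<Longrightarrow> S \<noteq> {} \<Longrightarrow>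
      sig_norm 2 (conv H (mixed_signals n S e x)) \<le> \<phi> (n - card S) (card S)"
    and nonneg: "\<And>k j. 0 \<le> \<phi> k j"
  shows "sig_norm 2 (\<lambda>t. conv_pow H n (\<lambda>s. x s + e s) t - conv_pow H n x t)
    \<le> (\<Sum>k<n. (exp 1 * real n / real k) ^ k * \<phi> k (n - k))"
proof -
  let ?P = "Pow {..<n} - {{}}"
  have "sig_norm 2 (\<lambda>t. conv_pow H n (\<lambda>s. x s + e s) t - conv_pow H n x t)
      \<le> (\<Sum>S\<in>?P. sig_norm 2 (conv H (mixed_signals n S e x)))"
    unfolding conv_pow_add_diff_eq_sum_mixed[OF H]
    using H e by (intro lp_norm_2_sum_le finite_support_conv_mixed) auto
  also have "\<dots> \<le> (\<Sum>S\<in>?P. \<phi> (n - card S) (card S))"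
    using bound by (intro sum_mono) auto
  also have "\<dots> = (\<Sum>k<n. real (n choose k) * \<phi> (n - (n - k)) (n - k))"
    using sum_nonempty_subsets_card[of "{..<n}" "\<lambda>j. \<phi> (n - j) j"] by simp
  also have "\<dots> \<le> (\<Sum>k<n. (exp 1 * real n / real k) ^ k * \<phi> k (n - k))"
    by (intro sum_mono) (simp add: mult_right_mono binomial_le_exp1_pow nonneg)
  finally show ?thesis .
qed

lemma sig_norm_2_conv_pow_add_diff_le_ker_norm_2:
  assumes H: "finite (support_on (tuples n) H)"
    and x: "finite (support_on UNIV x)" and e: "finite (support_on UNIV e)"
  shows "sig_norm 2 (\<lambda>t. conv_pow H n (\<lambda>s. x s + e s) t - conv_pow H n x t)
    \<le> ker_norm 2 n H * (\<Sum>k<n. (exp 1 * real n / real k) ^ k * sig_norm 1 x ^ k * sig_norm 1 e ^ (n - k))"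
proof -
  have "sig_norm 2 (\<lambda>t. conv_pow H n (\<lambda>s. x s + e s) t - conv_pow H n x t)
      \<le> (\<Sum>k<n. (exp 1 * real n / real k) ^ k * (ker_norm 2 n H * (sig_norm 1 x ^ k * sig_norm 1 e ^ (n - k))))"
  proof (rule sig_norm_2_conv_pow_add_diff_le[OF H e])
    fix S assume S: "S \<subseteq> {..<n}" "S \<noteq> {}"
    then have "mixed_signals n S e x \<noteq> []"
      by (auto simp: mixed_signals_def)
    then have "sig_norm 2 (conv H (mixed_signals n S e x))
        \<le> ker_norm 2 n H * (\<Prod>i<n. sig_norm 1 (mixed_signals n S e x ! i))"
      using sig_norm_2_conv_le_ker_norm_2[of "mixed_signals n S e x" H] H x e by auto
    also have "(\<Prod>i<n. sig_norm 1 (mixed_signals n S e x ! i)) = sig_norm 1 x ^ (n - card S) * sig_norm 1 e ^ card S"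
      using S(1) finite_subset[OF S(1)]
      by (subst prod_mixed_signals[where F = "\<lambda>y i. sig_norm 1 y"]) (auto simp: card_Diff_subset)
    finally show "sig_norm 2 (conv H (mixed_signals n S e x))
        \<le> ker_norm 2 n H * (sig_norm 1 x ^ (n - card S) * sig_norm 1 e ^ card S)" .
  qed (simp add: lp_norm_nonneg)
  then show ?thesis
    by (simp add: sum_distrib_left mult_ac)
qed

lemma sig_norm_2_conv_pow_add_diff_le_ker_norm_1:
  assumes H: "finite (support_on (tuples n) H)"
    and x: "finite (support_on UNIV x)" and e: "finite (support_on UNIV e)"
  shows "sig_norm 2 (\<lambda>t. conv_pow H n (\<lambda>s. x s + e s) t - conv_pow H n x t)
    \<le> ker_norm 1 n H * (\<Sum>k<n. (exp 1 * real n / real k) ^ k * sig_norm (2 * real k) x ^ k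
                                 * sig_norm (2 * real (n - k)) e ^ (n - k))"
proof -
  have "sig_norm 2 (\<lambda>t. conv_pow H n (\<lambda>s. x s + e s) t - conv_pow H n x t)
      \<le> (\<Sum>k<n. (exp 1 * real n / real k) ^ k * (ker_norm 1 n H *
            (sig_norm (2 * real k) x ^ k * sig_norm (2 * real (n - k)) e ^ (n - k))))"
  proof (rule sig_norm_2_conv_pow_add_diff_le[OF H e])
    fix S assume S: "S \<subseteq> {..<n}" "S \<noteq> {}"
    then obtain i where "i \<in> S" "i < n"
      by blast
    then show "sig_norm 2 (conv H (mixed_signals n S e x))
        \<le> ker_norm 1 n H * (sig_norm (2 * real (n - card S)) x ^ (n - card S)
              * sig_norm (2 * real (card S)) e ^ card S)"
      using sig_norm_2_conv_le_ker_norm_1[of "mixed_signals n S e x" H i] H e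
        sig_norm_2_prod_mixed_le[OF S x e]
      by auto
  qed (simp add: lp_norm_nonneg)
  then show ?thesis
    by (simp add: sum_distrib_left mult_ac)
qed

theorem theorem19:
  fixes N :: nat and H :: "nat \<Rightarrow> kernel" and x \<epsilon> :: signal
  assumes H_fin: "\<And>n. 1 \<le> n \<Longrightarrow> n \<le> N \<Longrightarrow> finite {\<tau>\<in>tuples n. H n \<tau> \<noteq> 0}"
    and x_fin: "finite {t. x t \<noteq> 0}"
    and eps_fin: "finite {t. \<epsilon> t \<noteq> 0}"
  shows "sig_norm 2 (\<lambda>t. volterra N H (\<lambda>s. x s + \<epsilon> s) t - volterra N H x t)
    \<le> min
      (\<Sum>n\<le>N. ker_norm 2 n (H n) *
         (\<Sum>k<n. (exp 1 * real n / real k) ^ k * sig_norm 1 x ^ k * sig_norm 1 \<epsilon> ^ (n - k)))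
      (\<Sum>n\<le>N. ker_norm 1 n (H n) *
         (\<Sum>k<n. (exp 1 * real n / real k) ^ k * sig_norm (2 * real k) x ^ k
                  * sig_norm (2 * real (n - k)) \<epsilon> ^ (n - k)))"
proof -
  let ?D = "\<lambda>n t. conv_pow (H n) n (\<lambda>s. x s + \<epsilon> s) t - conv_pow (H n) n x t"
  have H: "finite (support_on (tuples n) (H n))" if "n \<le> N" for n
    using H_fin[OF _ that] by (cases n) (auto simp: support_on_def tuples_def)
  have x: "finite (support_on UNIV x)" and e: "finite (support_on UNIV \<epsilon>)"
    using x_fin eps_fin by (simp_all add: support_on_def)
  have diff: "(\<lambda>t. volterra N H (\<lambda>s. x s + \<epsilon> s) t - volterra N H x t) = (\<lambda>t. \<Sum>n\<le>N. ?D n t)"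
    by (simp add: volterra_def sum_subtractf)
  have "sig_norm 2 (\<lambda>t. volterra N H (\<lambda>s. x s + \<epsilon> s) t - volterra N H x t)
      \<le> (\<Sum>n\<le>N. sig_norm 2 (?D n))"
    unfolding diff using H e by (intro lp_norm_2_sum_le finite_support_conv_pow_add_diff) auto
  moreover have "(\<Sum>n\<le>N. sig_norm 2 (?D n)) \<le> (\<Sum>n\<le>N. ker_norm 2 n (H n) *
      (\<Sum>k<n. (exp 1 * real n / real k) ^ k * sig_norm 1 x ^ k * sig_norm 1 \<epsilon> ^ (n - k)))"
    using H x e by (intro sum_mono sig_norm_2_conv_pow_add_diff_le_ker_norm_2) auto
  moreover have "(\<Sum>n\<le>N. sig_norm 2 (?D n)) \<le> (\<Sum>n\<le>N. ker_norm 1 n (H n) *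
      (\<Sum>k<n. (exp 1 * real n / real k) ^ k * sig_norm (2 * real k) x ^ k
               * sig_norm (2 * real (n - k)) \<epsilon> ^ (n - k)))"
    using H x e by (intro sum_mono sig_norm_2_conv_pow_add_diff_le_ker_norm_1) auto
  ultimately show ?thesis
    by simp
qed

end
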